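(* Assume that $\widetilde{\mathbb{C}}_e$ and $\widetilde{\mathbb{L}}_{aniso}$ are positive definite, $\widetilde{\mathbb{C}}_{micro}$ and $\widetilde{\mathbb{C}}_c$ are positive semi-definite and bounded, and $\rho,J,L_c,\mu>0$. Then there is a constant $c>0$ such that $$\mathcal{W}_1\big((\varphi,\Phi),(\varphi,\Phi)\big)\ge c\left(\|\varphi\|^2_{H^1(\Omega)}+\|\Phi\|^2_{L^2(\Omega)}+\|\mathrm{Curl}\,\Phi\|^2_{L^2(\Omega)}\right)$$ for all $(\varphi,\Phi)\in H_0^1(\Omega)\times H_0(\mathrm{Curl};\Omega)$.
   Context: $\Omega\subset\mathbb{R}^3$ is a bounded domain with piecewise smooth boundary. For $X\in\mathbb{R}^{3\times3}$, $\mathrm{sym}\,X=\frac12(X+X^T)$, $\mathrm{skew}\,X=\frac12(X-X^T)$, $\langle X,Y\rangle=\mathrm{tr}(XY^T)$, $\|X\|^2=\langle X,X\rangle$. $H_0^1(\Omega)$ denotes $\mathbb{R}^3$-valued fields with components in $H^1_0(\Omega)$; $\mathrm{Curl}\,P$ is the row-wise curl of $P:\Omega\to\mathbb{R}^{3\times3}$, and $H_0(\mathrm{Curl};\Omega)$ is the closure of $C_0^\infty(\Omega;\mathbb{R}^{3\times3})$ in the norm $(\|P\|^2_{L^2}+\|\mathrm{Curl}\,P\|^2_{L^2})^{1/2}$. For a constant fourth-order tensor $\mathbb{C}$, $(\mathbb{C}.X)_{ij}=\mathbb{C}_{ijkl}X_{kl}$. $\widetilde{\mathbb{C}}_e,\widetilde{\mathbb{C}}_{micro}$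 act on $\mathrm{Sym}(3)$ with $\mathbb{C}_{ijrs}=\mathbb{C}_{rsij}=\mathbb{C}_{jirs}$; $\widetilde{\mathbb{C}}_c$ acts on $\mathfrak{so}(3)$ with $\mathbb{C}_{ijrs}=-\mathbb{C}_{jirs}=\mathbb{C}_{rsij}$; $\widetilde{\mathbb{L}}_{aniso}$ acts on $\mathbb{R}^{3\times3}$ with $\mathbb{L}_{ijrs}=\mathbb{L}_{rsij}$. Positive definite means $m\|X\|^2\le\langle\mathbb{C}.X,X\rangle\le M\|X\|^2$ with $0<m\le M$ on the relevant domain; positive semi-definite and bounded means $0\le\langle\mathbb{C}.X,X\rangle\le M\|X\|^2$. $\mathcal{W}_1((u,P),(\varphi,\Phi))=\int_\Omega\big(\rho\langle u,\varphi\rangle+J\langle P,\Phi\rangle+\langle\widetilde{\mathbb{C}}_e.\mathrm{sym}(\nabla u-P),\mathrm{sym}(\nabla\varphi-\Phi)\rangle+\langle\widetilde{\mathbb{C}}_c.\mathrm{skew}(\nabla u-P),\mathrm{skew}(\nabla\varphi-\Phi)\rangle+\langle\widetilde{\mathbb{C}}_{micro}.\mathrm{sym}P,\mathrm{sym}\Phi\rangle+\mu L_c^2\langle\widetilde{\mathbb{L}}_{aniso}.\mathrm{Curl}P,\mathrm{Curl}\Phi\rangle\big)dx$. *)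

theory Defs
  imports "HOL-Analysis.Analysis"
begin

type_synonym vec3 = "real^3"
type_synonym mat3 = "real^3^3"
type_synonym tensor4 = "3 \<Rightarrow> 3 \<Rightarrow> 3 \<Rightarrow> 3 \<Rightarrow> real"

definition symm :: "mat3 \<Rightarrow> mat3" where
  "symm X = (1/2) *\<^sub>R (X + transpose X)"

definition skew :: "mat3 \<Rightarrow> mat3" where
  "skew X = (1/2) *\<^sub>R (X - transpose X)"

text \<open>Sym(3), so(3), and the action (C.X)_ij = C_ijkl X_kl.  The Frobenius inner product
  tr(X Y^T) is the inner product of real^3^3, and the norm is the Frobenius norm.\<close>

definition Sym3 :: "mat3 set" where "Sym3 = {X. transpose X = X}"
definition so3 :: "mat3 set" where "so3 = {X. transpose X = - X}"

definition tact :: "tensor4 \<Rightarrow> mat3 \<Rightarrow> mat3" where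
  "tact C X = (\<chi> i j. \<Sum>k\<in>UNIV. \<Sum>l\<in>UNIV. C i j k l * X $ k $ l)"

definition pos_def_on :: "mat3 set \<Rightarrow> tensor4 \<Rightarrow> bool" where
  "pos_def_on S C \<longleftrightarrow> (\<exists>m M. 0 < m \<and> m \<le> M \<and>
      (\<forall>X\<in>S. m * (norm X)\<^sup>2 \<le> tact C X \<bullet> X \<and> tact C X \<bullet> X \<le> M * (norm X)\<^sup>2))"

definition psd_bounded_on :: "mat3 set \<Rightarrow> tensor4 \<Rightarrow> bool" where
  "psd_bounded_on S C \<longleftrightarrow> (\<exists>M. \<forall>X\<in>S. 0 \<le> tact C X \<bullet> X \<and> tact C X \<bullet> X \<le> M * (norm X)\<^sup>2)"

definition pdiff :: "(vec3 \<Rightarrow> 'a::real_normed_vector) \<Rightarrow> 3 \<Rightarrow> vec3 \<Rightarrow> 'a" where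
  "pdiff f j x = frechet_derivative f (at x) (axis j 1)"

coinductive smooth :: "(vec3 \<Rightarrow> 'a::real_normed_vector) \<Rightarrow> bool" where
  "continuous_on UNIV f \<Longrightarrow> (\<forall>x. f differentiable (at x)) \<Longrightarrow> (\<forall>j. smooth (pdiff f j))
     \<Longrightarrow> smooth f"

definition test_field :: "vec3 set \<Rightarrow> (vec3 \<Rightarrow> 'a::real_normed_vector) \<Rightarrow> bool" where
  "test_field \<Omega> f \<longleftrightarrow> smooth f \<and> compact (closure {x. f x \<noteq> 0}) \<and> closure {x. f x \<noteq> 0} \<subseteq> \<Omega>"

definition grad :: "(vec3 \<Rightarrow> vec3) \<Rightarrow> vec3 \<Rightarrow> mat3" where
  "grad u x = (\<chi> i j. pdiff u j x $ i)"

definition Curl :: "(vec3 \<Rightarrow> mat3) \<Rightarrow> vec3 \<Rightarrow> mat3" where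
  "Curl P x = (\<chi> i. vector [ pdiff P 2 x $ i $ 3 - pdiff P 3 x $ i $ 2,
                              pdiff P 3 x $ i $ 1 - pdiff P 1 x $ i $ 3,
                              pdiff P 1 x $ i $ 2 - pdiff P 2 x $ i $ 1 ])"

definition L2 :: "vec3 set \<Rightarrow> (vec3 \<Rightarrow> 'a::euclidean_space) \<Rightarrow> bool" where
  "L2 \<Omega> f \<longleftrightarrow> f measurable_on \<Omega> \<and> (\<lambda>x. (norm (f x))\<^sup>2) integrable_on \<Omega>"

definition L2_conv :: "vec3 set \<Rightarrow> (nat \<Rightarrow> vec3 \<Rightarrow> 'a::euclidean_space) \<Rightarrow> (vec3 \<Rightarrow> 'a) \<Rightarrow> bool" where
  "L2_conv \<Omega> fs f \<longleftrightarrow> (\<lambda>n. integral \<Omega> (\<lambda>x. (norm (fs n x - f x))\<^sup>2)) \<longlonglongrightarrow> 0"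

text \<open>An element of H_0^1 is given by the field u together with its gradient D (in L^2),
  obtained as an H^1-limit of smooth compactly supported fields.\<close>

definition H01 :: "vec3 set \<Rightarrow> (vec3 \<Rightarrow> vec3) \<Rightarrow> (vec3 \<Rightarrow> mat3) \<Rightarrow> bool" where
  "H01 \<Omega> u D \<longleftrightarrow> L2 \<Omega> u \<and> L2 \<Omega> D \<and>
     (\<exists>us. (\<forall>n. test_field \<Omega> (us n)) \<and> L2_conv \<Omega> us u \<and> L2_conv \<Omega> (\<lambda>n. grad (us n)) D)"

text \<open>An element of H_0(Curl) is given by P together with its Curl C (in L^2).\<close>

definition H0Curl :: "vec3 set \<Rightarrow> (vec3 \<Rightarrow> mat3) \<Rightarrow> (vec3 \<Rightarrow> mat3) \<Rightarrow> bool" where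
  "H0Curl \<Omega> P C \<longleftrightarrow> L2 \<Omega> P \<and> L2 \<Omega> C \<and>
     (\<exists>Ps. (\<forall>n. test_field \<Omega> (Ps n)) \<and> L2_conv \<Omega> Ps P \<and> L2_conv \<Omega> (\<lambda>n. Curl (Ps n)) C)"

definition W1 :: "vec3 set \<Rightarrow> real \<Rightarrow> real \<Rightarrow> real \<Rightarrow> real \<Rightarrow> tensor4 \<Rightarrow> tensor4 \<Rightarrow> tensor4 \<Rightarrow> tensor4
   \<Rightarrow> (vec3 \<Rightarrow> vec3) \<Rightarrow> (vec3 \<Rightarrow> mat3) \<Rightarrow> (vec3 \<Rightarrow> mat3) \<Rightarrow> (vec3 \<Rightarrow> mat3)
   \<Rightarrow> (vec3 \<Rightarrow> vec3) \<Rightarrow> (vec3 \<Rightarrow> mat3) \<Rightarrow> (vec3 \<Rightarrow> mat3) \<Rightarrow> (vec3 \<Rightarrow> mat3) \<Rightarrow> real" where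
  "W1 \<Omega> \<rho> J \<mu> Lc Ce Cc Cmicro Laniso u Du P CurlP \<phi> D\<phi> \<Phi> Curl\<Phi> =
     integral \<Omega> (\<lambda>x.
        \<rho> * (u x \<bullet> \<phi> x) + J * (P x \<bullet> \<Phi> x)
      + tact Ce (symm (Du x - P x)) \<bullet> symm (D\<phi> x - \<Phi> x)
      + tact Cc (skew (Du x - P x)) \<bullet> skew (D\<phi> x - \<Phi> x)
      + tact Cmicro (symm (P x)) \<bullet> symm (\<Phi> x)
      + \<mu> * Lc\<^sup>2 * (tact Laniso (CurlP x) \<bullet> Curl\<Phi> x))"

end

theory Submission
  imports Defs
begin

text \<open>
  Pointwise, the integrand of W1 dominates a positive multiple of
  |\<phi>|^2 + |\<Phi>|^2 + |sym(\<nabla>\<phi> - \<Phi>)|^2 + |Curl \<Phi>|^2, by the definiteness assumptions on the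
  tensors. The missing term |\<nabla>\<phi>|^2 is recovered from Korn's first inequality
  \<integral>|\<nabla>\<phi>|^2 \<le> c \<integral>|sym \<nabla>\<phi>|^2 on H_0^1 and |sym \<nabla>\<phi>|^2 \<le> 2|sym(\<nabla>\<phi> - \<Phi>)|^2 + 2|\<Phi>|^2.

  For a smooth compactly supported field u, 2|sym \<nabla>u|^2 = |\<nabla>u|^2 + \<Sum> \<partial>_j u_i \<partial>_i u_j, and the
  last term integrates to \<integral>(div u)^2 \<ge> 0. Instead of integrating by parts, this is shown for
  difference quotients, where it reduces to translation invariance of the integral, and then
  passed to the limit by dominated convergence. Approximation by such fields carries Korn's
  inequality, with constant 8 instead of 2, over to H_0^1.
\<close>

section \<open>Symmetric and skew-symmetric parts\<close>

lemma symm_component [simp]: "symm X $ i $ j = (X $ i $ j + X $ j $ i) / 2"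
  by (simp add: symm_def transpose_def)

lemma skew_component [simp]: "skew X $ i $ j = (X $ i $ j - X $ j $ i) / 2"
  by (simp add: skew_def transpose_def)

lemma symm_in_Sym3: "symm X \<in> Sym3"
  by (simp add: Sym3_def vec_eq_iff transpose_def)

lemma skew_in_so3: "skew X \<in> so3"
  by (simp add: so3_def vec_eq_iff transpose_def field_simps)

lemma bounded_linear_symm: "bounded_linear symm"
  unfolding linear_conv_bounded_linear[symmetric]
  by (rule linearI) (simp_all add: vec_eq_iff field_simps)

lemma bounded_linear_skew: "bounded_linear skew"
  unfolding linear_conv_bounded_linear[symmetric]
  by (rule linearI) (simp_all add: vec_eq_iff field_simps)

lemma bounded_linear_tact: "bounded_linear (tact C)"
  unfolding linear_conv_bounded_linear[symmetric]
  by (rule linearI) (simp_all add: vec_eq_iff tact_def algebra_simps sum.distrib sum_distrib_left)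

lemma power2_norm_mat: "(norm (X :: mat3))\<^sup>2 = (\<Sum>i\<in>UNIV. \<Sum>j\<in>UNIV. (X $ i $ j)\<^sup>2)"
  unfolding power2_norm_eq_inner by (simp add: inner_vec_def power2_eq_square)

lemma norm_transpose_mat: "norm (transpose (X :: mat3)) = norm X"
proof -
  have "(norm (transpose X))\<^sup>2 = (norm X)\<^sup>2"
    unfolding power2_norm_mat transpose_def vec_lambda_beta by (rule sum.swap)
  then show ?thesis
    by (simp add: power2_eq_iff_nonneg)
qed

lemma norm_symm_le: "norm (symm X) \<le> norm X"
proof -
  have "norm (symm X) \<le> (norm X + norm (transpose X)) / 2"
    using norm_triangle_ineq[of X "transpose X"] by (simp add: symm_def)
  then show ?thesis
    by (simp add: norm_transpose_mat)
qed

lemma two_power2_norm_symm: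
  "2 * (norm (symm X))\<^sup>2 = (norm X)\<^sup>2 + (\<Sum>i\<in>UNIV. \<Sum>j\<in>UNIV. X $ i $ j * X $ j $ i)"
  unfolding power2_norm_mat by (simp add: sum_3 power2_eq_square algebra_simps)

section \<open>Square-integrable fields\<close>

lemma power2_norm_add_le:
  fixes a b :: "'a::real_normed_vector"
  shows "(norm (a + b))\<^sup>2 \<le> 2 * (norm a)\<^sup>2 + 2 * (norm b)\<^sup>2"
proof -
  have "(norm (a + b))\<^sup>2 \<le> (norm a + norm b)\<^sup>2"
    by (simp add: norm_triangle_ineq power_mono)
  also have "\<dots> \<le> 2 * (norm a)\<^sup>2 + 2 * (norm b)\<^sup>2"
    using sum_squares_bound[of "norm a" "norm b"] by (simp add: power2_eq_square algebra_simps)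
  finally show ?thesis .
qed

lemma integrable_on_measurable_bounded:
  fixes f :: "'a::euclidean_space \<Rightarrow> real"
  assumes "f measurable_on S" "g integrable_on S" "\<And>x. x \<in> S \<Longrightarrow> \<bar>f x\<bar> \<le> g x"
    and "S \<in> sets lebesgue"
  shows "f integrable_on S"
  using measurable_bounded_by_integrable_imp_integrable_real[of f S g] assms
  by (simp add: measurable_on_iff_borel_measurable)

lemma L2_integrable_power2_norm: "L2 \<Omega> f \<Longrightarrow> (\<lambda>x. (norm (f x))\<^sup>2) integrable_on \<Omega>"
  by (simp add: L2_def)

lemma measurable_on_power2_norm:
  fixes f :: "'a::euclidean_space \<Rightarrow> 'b::euclidean_space"
  shows "f measurable_on S \<Longrightarrow> (\<lambda>x. (norm (f x))\<^sup>2) measurable_on S"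
  using measurable_on_compose_continuous_0[of f S "\<lambda>v. (norm v)\<^sup>2"]
  by (simp add: o_def continuous_intros)

lemma L2_linear:
  assumes T: "bounded_linear T" and f: "L2 \<Omega> f" and \<Omega>: "\<Omega> \<in> sets lebesgue"
  shows "L2 \<Omega> (\<lambda>x. T (f x))"
proof -
  obtain K where K: "\<And>v. norm (T v) \<le> norm v * K"
    using bounded_linear.bounded[OF T] by blast
  have meas: "(\<lambda>x. T (f x)) measurable_on \<Omega>"
    using measurable_on_compose_continuous_0[of f \<Omega> T] f T
    by (simp add: L2_def o_def linear_continuous_on bounded_linear.linear linear_0)
  moreover have "(\<lambda>x. (norm (T (f x)))\<^sup>2) integrable_on \<Omega>"
  proof (rule integrable_on_measurable_bounded[OF measurable_on_power2_norm[OF meas] _ _ \<Omega>])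
    show "(\<lambda>x. K\<^sup>2 * (norm (f x))\<^sup>2) integrable_on \<Omega>"
      using f by (simp add: L2_def integrable_on_mult_right)
    show "\<bar>(norm (T (f x)))\<^sup>2\<bar> \<le> K\<^sup>2 * (norm (f x))\<^sup>2" for x
      using power_mono[OF K[of "f x"] norm_ge_zero, of 2] by (simp add: power_mult_distrib mult.commute)
  qed
  ultimately show ?thesis
    by (simp add: L2_def)
qed

lemma L2_add:
  assumes f: "L2 \<Omega> f" and g: "L2 \<Omega> g" and \<Omega>: "\<Omega> \<in> sets lebesgue"
  shows "L2 \<Omega> (\<lambda>x. f x + g x)"
proof -
  have meas: "(\<lambda>x. f x + g x) measurable_on \<Omega>"
    using f g by (simp add: L2_def measurable_on_add)
  moreover have "(\<lambda>x. (norm (f x + g x))\<^sup>2) integrable_on \<Omega>"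
  proof (rule integrable_on_measurable_bounded[OF measurable_on_power2_norm[OF meas] _ _ \<Omega>])
    show "(\<lambda>x. 2 * (norm (f x))\<^sup>2 + 2 * (norm (g x))\<^sup>2) integrable_on \<Omega>"
      using f g by (simp add: L2_def integrable_add)
    show "\<bar>(norm (f x + g x))\<^sup>2\<bar> \<le> 2 * (norm (f x))\<^sup>2 + 2 * (norm (g x))\<^sup>2" for x
      using power2_norm_add_le by simp
  qed
  ultimately show ?thesis
    by (simp add: L2_def)
qed

lemma L2_diff:
  assumes f: "L2 \<Omega> f" and g: "L2 \<Omega> g" and \<Omega>: "\<Omega> \<in> sets lebesgue"
  shows "L2 \<Omega> (\<lambda>x. f x - g x)"
  using L2_add[OF f L2_linear[OF bounded_linear_minus[OF bounded_linear_ident] g \<Omega>] \<Omega>] by simp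

lemma integrable_inner_L2:
  assumes f: "L2 \<Omega> f" and g: "L2 \<Omega> g" and \<Omega>: "\<Omega> \<in> sets lebesgue"
  shows "(\<lambda>x. f x \<bullet> g x) integrable_on \<Omega>"
proof (rule integrable_on_measurable_bounded[OF _ _ _ \<Omega>])
  show "(\<lambda>x. f x \<bullet> g x) measurable_on \<Omega>"
    using measurable_on_bilinear[of inner f \<Omega> g] f g bounded_bilinear_inner
    by (simp add: L2_def bilinear_conv_bounded_bilinear)
  show "(\<lambda>x. (norm (f x))\<^sup>2 + (norm (g x))\<^sup>2) integrable_on \<Omega>"
    using f g by (simp add: L2_def integrable_add)
  show "\<bar>f x \<bullet> g x\<bar> \<le> (norm (f x))\<^sup>2 + (norm (g x))\<^sup>2" for x
    using Cauchy_Schwarz_ineq2[of "f x" "g x"] sum_squares_bound[of "norm (f x)" "norm (g x)"]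
      mult_nonneg_nonneg[OF norm_ge_zero norm_ge_zero, of "f x" "g x"] by linarith
qed

lemma integral_power2_norm_add_le:
  assumes f: "L2 \<Omega> f" and g: "L2 \<Omega> g" and \<Omega>: "\<Omega> \<in> sets lebesgue"
  shows "integral \<Omega> (\<lambda>x. (norm (f x + g x))\<^sup>2)
           \<le> 2 * integral \<Omega> (\<lambda>x. (norm (f x))\<^sup>2) + 2 * integral \<Omega> (\<lambda>x. (norm (g x))\<^sup>2)"
proof -
  have "L2 \<Omega> (\<lambda>x. f x + g x)"
    by (rule L2_add[OF f g \<Omega>])
  then have "integral \<Omega> (\<lambda>x. (norm (f x + g x))\<^sup>2)
      \<le> integral \<Omega> (\<lambda>x. 2 * (norm (f x))\<^sup>2 + 2 * (norm (g x))\<^sup>2)"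
    using f g by (intro integral_le) (auto simp: L2_def integrable_add power2_norm_add_le)
  also have "\<dots> = 2 * integral \<Omega> (\<lambda>x. (norm (f x))\<^sup>2) + 2 * integral \<Omega> (\<lambda>x. (norm (g x))\<^sup>2)"
    using f g by (simp add: L2_def integral_add)
  finally show ?thesis .
qed

lemma integral_power2_norm_symm_le:
  assumes f: "L2 \<Omega> f" and \<Omega>: "\<Omega> \<in> sets lebesgue"
  shows "integral \<Omega> (\<lambda>x. (norm (symm (f x)))\<^sup>2) \<le> integral \<Omega> (\<lambda>x. (norm (f x))\<^sup>2)"
  using L2_linear[OF bounded_linear_symm f \<Omega>] f
  by (intro integral_le) (auto simp: L2_def norm_symm_le power_mono)

lemma integral_power2_norm_symm_add_le:
  assumes f: "L2 \<Omega> f" and g: "L2 \<Omega> g" and \<Omega>: "\<Omega> \<in> sets lebesgue"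
  shows "integral \<Omega> (\<lambda>x. (norm (symm (f x + g x)))\<^sup>2)
           \<le> 2 * integral \<Omega> (\<lambda>x. (norm (symm (f x)))\<^sup>2) + 2 * integral \<Omega> (\<lambda>x. (norm (g x))\<^sup>2)"
proof -
  have "symm (f x + g x) = symm (f x) + symm (g x)" for x
    by (simp add: vec_eq_iff field_simps)
  then have "integral \<Omega> (\<lambda>x. (norm (symm (f x + g x)))\<^sup>2)
      \<le> 2 * integral \<Omega> (\<lambda>x. (norm (symm (f x)))\<^sup>2) + 2 * integral \<Omega> (\<lambda>x. (norm (symm (g x)))\<^sup>2)"
    using integral_power2_norm_add_le[OF L2_linear[OF bounded_linear_symm f \<Omega>]
        L2_linear[OF bounded_linear_symm g \<Omega>] \<Omega>] by simp
  with integral_power2_norm_symm_le[OF g \<Omega>] show ?thesis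
    by linarith
qed

section \<open>Korn's inequality for smooth compactly supported fields\<close>

lemma smoothD:
  assumes "smooth f"
  shows "continuous_on UNIV f" "f differentiable (at x)" "smooth (pdiff f j)"
  using assms by (auto elim: smooth.cases)

lemma has_real_derivative_coordinate_line:
  fixes f :: "vec3 \<Rightarrow> vec3"
  assumes "\<And>y. f differentiable (at y)"
  shows "((\<lambda>t. f (x + t *\<^sub>R axis j 1) $ i) has_real_derivative pdiff f j (x + t *\<^sub>R axis j 1) $ i) (at t)"
proof -
  let ?y = "x + t *\<^sub>R axis j 1"
  have f: "(f has_derivative frechet_derivative f (at ?y)) (at ?y)"
    using assms frechet_derivative_works by blast
  have line: "((\<lambda>t. x + t *\<^sub>R axis j 1) has_derivative (\<lambda>s. s *\<^sub>R axis j 1)) (at t)"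
    by (auto intro!: derivative_eq_intros)
  have "frechet_derivative f (at ?y) (s *\<^sub>R axis j 1) = s *\<^sub>R pdiff f j ?y" for s
    using has_derivative_linear[OF f] by (simp add: pdiff_def linear_scale)
  then have "((\<lambda>t. f (x + t *\<^sub>R axis j 1)) has_vector_derivative pdiff f j ?y) (at t)"
    using diff_chain_at[OF line f] by (simp add: has_vector_derivative_def o_def)
  from bounded_linear.has_vector_derivative[OF bounded_linear_vec_nth this, of i] show ?thesis
    by (simp add: has_real_derivative_iff_has_vector_derivative)
qed

lemma integral_UNIV_vanishing_outside:
  fixes f :: "'a::euclidean_space \<Rightarrow> 'b::banach"
  assumes "\<And>x. x \<notin> S \<Longrightarrow> f x = 0"
  shows "integral UNIV f = integral S f"
proof -
  have "(\<lambda>x. if x \<in> S then f x else 0) = f"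
    using assms by auto
  then show ?thesis
    using integral_restrict_UNIV[of S f] by simp
qed

lemma integrable_UNIV_vanishing_outside:
  fixes f :: "'a::euclidean_space \<Rightarrow> 'b::banach"
  assumes "f integrable_on UNIV" "\<And>x. x \<notin> S \<Longrightarrow> f x = 0"
  shows "f integrable_on S"
proof -
  have "(\<lambda>x. if x \<in> S then f x else 0) = f"
    using assms by auto
  then show ?thesis
    using integrable_restrict_UNIV[of S f] assms(1) by simp
qed

lemma integrable_continuous_bounded_support:
  fixes F :: "'a::euclidean_space \<Rightarrow> 'b::banach"
  assumes "continuous_on UNIV F" "bounded S" "\<And>x. x \<notin> S \<Longrightarrow> F x = 0"
  shows "F integrable_on UNIV"
proof -
  obtain a b where ab: "S \<subseteq> cbox a b"
    using bounded_subset_cbox_symmetric[OF assms(2)] by blast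
  have "F integrable_on cbox a b"
    using integrable_continuous continuous_on_subset[OF assms(1)] by blast
  then show ?thesis
    using integrable_on_superset[of F "cbox a b" UNIV] assms(3) ab by blast
qed

lemma integral_translate_bounded_support:
  fixes F :: "'a::euclidean_space \<Rightarrow> 'b::banach"
  assumes "bounded S" "\<And>x. x \<notin> S \<Longrightarrow> F x = 0"
  shows "integral UNIV (\<lambda>x. F (x + c)) = integral UNIV F"
proof -
  obtain a b where ab: "S \<subseteq> cbox a b"
    using bounded_subset_cbox_symmetric[OF assms(1)] by blast
  then have F0: "F x = 0" if "x \<notin> cbox a b" for x
    using assms(2) that by blast
  have "F (x + c) = 0" if "x \<notin> cbox (a - c) (b - c)" for x
  proof (rule F0)
    show "x + c \<notin> cbox a b"
      using that by (auto simp: mem_box inner_simps) (metis diff_le_eq le_diff_eq)+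
  qed
  then have "integral UNIV (\<lambda>x. F (x + c)) = integral (cbox (a - c) (b - c)) (F \<circ> (+) c)"
    by (subst integral_UNIV_vanishing_outside) (auto simp: o_def add.commute)
  also have "\<dots> = integral UNIV F"
    using integral_shift_cbox_plus[of "a - c" "b - c" F c] integral_UNIV_vanishing_outside[of "cbox a b" F] F0
    by simp
  finally show ?thesis .
qed

locale smooth_compact_support =
  fixes u :: "vec3 \<Rightarrow> vec3" and K :: "vec3 set"
  assumes smooth_u: "smooth u" and compact_K: "compact K" and u_outside: "\<And>x. x \<notin> K \<Longrightarrow> u x = 0"
begin

lemma continuous_u: "continuous_on UNIV u"
  using smoothD(1)[OF smooth_u] .

lemma differentiable_u: "u differentiable (at x)"
  using smoothD(2)[OF smooth_u] .

lemma continuous_pdiff: "continuous_on UNIV (pdiff u j)"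
  using smoothD(1)[OF smoothD(3)[OF smooth_u]] .

lemma pdiff_outside:
  assumes "x \<notin> K"
  shows "pdiff u j x = 0"
proof -
  have open_complement: "open (- K)"
    using compact_imp_closed[OF compact_K] by (simp add: open_Compl)
  have "((\<lambda>y. 0) has_derivative (\<lambda>h. 0)) (at x)"
    by simp
  then have "(u has_derivative (\<lambda>h. 0)) (at x)"
    by (rule has_derivative_transform_within_open[OF _ open_complement])
      (use assms u_outside in auto)
  then have "frechet_derivative u (at x) = (\<lambda>h. 0)"
    using frechet_derivative_at by metis
  then show ?thesis
    by (simp add: pdiff_def)
qed

lemma pdiff_bounded:
  obtains B where "\<And>j y. norm (pdiff u j y) \<le> B"
proof -
  have "compact (\<Union>j. pdiff u j ` K)"
    by (intro compact_UN finite compact_continuous_image continuous_on_subset[OF continuous_pdiff]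
        compact_K) auto
  then obtain B where B: "\<And>z. z \<in> (\<Union>j. pdiff u j ` K) \<Longrightarrow> norm z \<le> B"
    using compact_imp_bounded bounded_iff by metis
  have "norm (pdiff u j y) \<le> max B 0" for j y
  proof (cases "y \<in> K")
    case True
    then have "pdiff u j y \<in> (\<Union>j. pdiff u j ` K)"
      by blast
    then show ?thesis
      using B by (meson max.coboundedI1 order_trans)
  next
    case False
    then show ?thesis
      using pdiff_outside by simp
  qed
  then show ?thesis
    using that by blast
qed

definition K_enlarged :: "vec3 set" where
  "K_enlarged = {x + y | x y. x \<in> K \<and> y \<in> cball 0 1}"

lemma compact_K_enlarged: "compact K_enlarged"
  unfolding K_enlarged_def by (intro compact_sums compact_K compact_cball)

definition diff_quot :: "real \<Rightarrow> 3 \<Rightarrow> 3 \<Rightarrow> vec3 \<Rightarrow> real" where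
  "diff_quot h j i x = (u (x + h *\<^sub>R axis j 1) $ i - u x $ i) / h"

lemma diff_quot_outside:
  assumes h: "\<bar>h\<bar> \<le> 1" and x: "x \<notin> K_enlarged"
  shows "diff_quot h j i x = 0"
proof -
  have "x \<notin> K"
    using x unfolding K_enlarged_def by force
  moreover have "x + h *\<^sub>R axis j 1 \<notin> K"
  proof
    assume "x + h *\<^sub>R axis j 1 \<in> K"
    moreover have "- h *\<^sub>R axis j 1 \<in> cball (0 :: vec3) 1"
      using h by (simp add: dist_norm)
    ultimately have "(x + h *\<^sub>R axis j 1) + (- h *\<^sub>R axis j 1) \<in> K_enlarged"
      unfolding K_enlarged_def by blast
    then show False
      using x by simp
  qed
  ultimately show ?thesis
    by (simp add: diff_quot_def u_outside)
qed

lemma diff_quot_bounded: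
  assumes B: "\<And>j y. norm (pdiff u j y) \<le> B"
  shows "\<bar>diff_quot h j i x\<bar> \<le> B"
proof (cases "h = 0")
  case True
  then show ?thesis
    using B[of j x] by (simp add: diff_quot_def order_trans[OF norm_ge_zero])
next
  case False
  let ?f = "\<lambda>t. u (x + t *\<^sub>R axis j 1) $ i"
  have "norm (?f h - ?f 0) \<le> B * norm (h - 0)"
  proof (rule field_differentiable_bound[of UNIV])
    show "(?f has_field_derivative pdiff u j (x + t *\<^sub>R axis j 1) $ i) (at t within UNIV)" for t
      using has_real_derivative_coordinate_line[OF differentiable_u] by simp
    show "norm (pdiff u j (x + t *\<^sub>R axis j 1) $ i) \<le> B" for t
      using B component_le_norm_cart order_trans by (metis real_norm_def)
  qed auto
  with False show ?thesis
    by (simp add: diff_quot_def abs_divide divide_le_eq)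
qed

lemma continuous_diff_quot: "continuous_on UNIV (diff_quot h j i)"
  unfolding diff_quot_def divide_inverse
  by (intro continuous_intros continuous_on_compose2[OF continuous_u]) auto

lemma diff_quot_tendsto: "((\<lambda>h. diff_quot h j i x) \<longlongrightarrow> pdiff u j x $ i) (at 0)"
proof -
  have "((\<lambda>t. u (x + t *\<^sub>R axis j 1) $ i) has_real_derivative pdiff u j x $ i) (at 0)"
    using has_real_derivative_coordinate_line[OF differentiable_u, of x j i 0] by simp
  then have "((\<lambda>h. (u (x + h *\<^sub>R axis j 1) $ i - u (x + 0 *\<^sub>R axis j 1) $ i) / (h - 0))
      \<longlongrightarrow> pdiff u j x $ i) (at 0)"
    by (simp only: has_field_derivative_iff)
  then show ?thesis
    by (simp add: diff_quot_def)
qed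

definition translated_product :: "3 \<Rightarrow> 3 \<Rightarrow> vec3 \<Rightarrow> vec3 \<Rightarrow> vec3 \<Rightarrow> real" where
  "translated_product i j a b x = u (x + a) $ i * u (x + b) $ j"

lemma translated_product_outside:
  assumes "x \<notin> (\<lambda>y. y - a) ` K"
  shows "translated_product i j a b x = 0"
proof -
  have "x + a \<notin> K"
    using assms by (metis add_diff_cancel image_eqI)
  then show ?thesis
    by (simp add: translated_product_def u_outside)
qed

lemma bounded_translated_K: "bounded ((\<lambda>y. y - a) ` K)"
  using bounded_translation[of K "- a"] compact_imp_bounded[OF compact_K] by simp

lemma integrable_translated_product: "translated_product i j a b integrable_on UNIV"
proof (rule integrable_continuous_bounded_support[OF _ bounded_translated_K translated_product_outside])
  show "continuous_on UNIV (translated_product i j a b)"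
    unfolding translated_product_def
    by (intro continuous_intros continuous_on_compose2[OF continuous_u]) auto
qed

lemma integral_translated_product_shift:
  "integral UNIV (translated_product i j (a + c) (b + c)) = integral UNIV (translated_product i j a b)"
proof -
  have "translated_product i j (a + c) (b + c) = (\<lambda>x. translated_product i j a b (x + c))"
    by (simp add: translated_product_def fun_eq_iff algebra_simps)
  then show ?thesis
    using integral_translate_bounded_support[OF bounded_translated_K translated_product_outside]
    by simp
qed

text \<open>Both sides expand into four translated products of components of u, which agree
  after shifting the integration variable.\<close>

lemma integral_diff_quot_product_swap:
  assumes "h \<noteq> 0"
  shows "integral UNIV (\<lambda>x. diff_quot h j i x * diff_quot h i j x)
           = integral UNIV (\<lambda>x. diff_quot (- h) i i x * diff_quot (- h) j j x)"
proof -
  let ?P = "translated_product i j" and ?ei = "h *\<^sub>R axis i 1" and ?ej = "h *\<^sub>R axis j 1"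
  have integral_comb: "integral UNIV (\<lambda>x. (?P a1 b1 x - ?P a2 b2 x - ?P a3 b3 x + ?P a4 b4 x) / h\<^sup>2)
      = (integral UNIV (?P a1 b1) - integral UNIV (?P a2 b2) - integral UNIV (?P a3 b3)
          + integral UNIV (?P a4 b4)) / h\<^sup>2" for a1 b1 a2 b2 a3 b3 a4 b4
    by (simp add: integral_add integral_diff integrable_add integrable_diff
        integrable_translated_product)
  have "diff_quot h j i x * diff_quot h i j x = (?P ?ej ?ei x - ?P ?ej 0 x - ?P 0 ?ei x + ?P 0 0 x) / h\<^sup>2"
    and "diff_quot (- h) i i x * diff_quot (- h) j j x
      = (?P (- ?ei) (- ?ej) x - ?P (- ?ei) 0 x - ?P 0 (- ?ej) x + ?P 0 0 x) / h\<^sup>2" for x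
    using assms by (simp_all add: diff_quot_def translated_product_def power2_eq_square field_simps)
  moreover have "integral UNIV (?P ?ej ?ei) = integral UNIV (?P (- ?ei) (- ?ej))"
    using integral_translated_product_shift[where a="- ?ei" and b="- ?ej" and c="?ei + ?ej"]
    by (simp add: algebra_simps)
  moreover have "integral UNIV (?P ?ej 0) = integral UNIV (?P 0 (- ?ej))"
    using integral_translated_product_shift[where a=0 and b="- ?ej" and c="?ej"] by simp
  moreover have "integral UNIV (?P 0 ?ei) = integral UNIV (?P (- ?ei) 0)"
    using integral_translated_product_shift[where a="- ?ei" and b=0 and c="?ei"] by simp
  ultimately show ?thesis
    by (simp only: integral_comb) (simp add: algebra_simps)
qed

lemma integrable_diff_quot_product:
  assumes "\<bar>h\<bar> \<le> 1"
  shows "(\<lambda>x. diff_quot h j i x * diff_quot h l k x) integrable_on UNIV"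
proof (rule integrable_continuous_bounded_support)
  show "continuous_on UNIV (\<lambda>x. diff_quot h j i x * diff_quot h l k x)"
    by (intro continuous_intros continuous_diff_quot)
  show "bounded K_enlarged"
    by (rule compact_imp_bounded[OF compact_K_enlarged])
  show "diff_quot h j i x * diff_quot h l k x = 0" if "x \<notin> K_enlarged" for x
    using diff_quot_outside[OF assms that] by simp
qed

lemma sum_integral_diff_quot_product_nonneg:
  assumes "h \<noteq> 0" "\<bar>h\<bar> \<le> 1"
  shows "0 \<le> (\<Sum>i\<in>UNIV. \<Sum>j\<in>UNIV. integral UNIV (\<lambda>x. diff_quot h j i x * diff_quot h i j x))"
proof -
  have int: "(\<lambda>x. diff_quot (- h) i i x * diff_quot (- h) j j x) integrable_on UNIV" for i j
    using integrable_diff_quot_product assms(2) by simp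
  have "(\<Sum>i\<in>UNIV. \<Sum>j\<in>UNIV. integral UNIV (\<lambda>x. diff_quot h j i x * diff_quot h i j x))
      = integral UNIV (\<lambda>x. \<Sum>i\<in>UNIV. \<Sum>j\<in>UNIV. diff_quot (- h) i i x * diff_quot (- h) j j x)"
    by (simp add: integral_diff_quot_product_swap[OF assms(1)] integral_sum integrable_sum int)
  also have "\<dots> = integral UNIV (\<lambda>x. (\<Sum>i\<in>UNIV. diff_quot (- h) i i x)\<^sup>2)"
    by (simp add: power2_eq_square sum_product)
  also have "\<dots> \<ge> 0"
  proof (rule integral_nonneg)
    show "(\<lambda>x. (\<Sum>i\<in>UNIV. diff_quot (- h) i i x)\<^sup>2) integrable_on UNIV"
      unfolding power2_eq_square sum_product by (intro integrable_sum int) auto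
  qed simp
  finally show ?thesis .
qed

lemma tendsto_integral_diff_quot_product:
  assumes h: "filterlim h (at 0) sequentially" "\<And>n. \<bar>h n\<bar> \<le> 1"
  shows "(\<lambda>n. integral UNIV (\<lambda>x. diff_quot (h n) j i x * diff_quot (h n) i j x))
           \<longlonglongrightarrow> integral UNIV (\<lambda>x. pdiff u j x $ i * pdiff u i x $ j)"
proof -
  obtain B where B: "\<And>j y. norm (pdiff u j y) \<le> B"
    using pdiff_bounded by blast
  then have "0 \<le> B"
    by (meson norm_ge_zero order_trans)
  define bound where "bound x = (if x \<in> K_enlarged then B\<^sup>2 else 0)" for x
  show ?thesis
  proof (rule dominated_convergence(2))
    show "(\<lambda>x. diff_quot (h n) j i x * diff_quot (h n) i j x) integrable_on UNIV" for n
      using integrable_diff_quot_product[OF h(2)] .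
    show "bound integrable_on UNIV"
      unfolding bound_def integrable_restrict_UNIV
      using integrable_on_const[OF lmeasurable_compact[OF compact_K_enlarged]] .
    show "norm (diff_quot (h n) j i x * diff_quot (h n) i j x) \<le> bound x" for n x
      using diff_quot_outside[OF h(2)] mult_mono[OF diff_quot_bounded[OF B] diff_quot_bounded[OF B]]
        \<open>0 \<le> B\<close>
      by (auto simp: bound_def abs_mult power2_eq_square)
    show "(\<lambda>n. diff_quot (h n) j i x * diff_quot (h n) i j x)
        \<longlonglongrightarrow> pdiff u j x $ i * pdiff u i x $ j" for x
      by (intro tendsto_mult filterlim_compose[OF diff_quot_tendsto h(1)])
  qed
qed

lemma sum_integral_pdiff_product_nonneg:
  "0 \<le> (\<Sum>i\<in>UNIV. \<Sum>j\<in>UNIV. integral UNIV (\<lambda>x. pdiff u j x $ i * pdiff u i x $ j))"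
proof -
  define h where "h n = inverse (real (Suc n))" for n
  have h: "h n \<noteq> 0" "\<bar>h n\<bar> \<le> 1" for n
    by (simp_all add: h_def field_simps)
  have "h \<longlonglongrightarrow> 0"
    unfolding h_def by (rule LIMSEQ_inverse_real_of_nat)
  with h(1) have "filterlim h (at 0) sequentially"
    by (simp add: filterlim_at)
  then have "(\<lambda>n. \<Sum>i\<in>UNIV. \<Sum>j\<in>UNIV. integral UNIV (\<lambda>x. diff_quot (h n) j i x * diff_quot (h n) i j x))
      \<longlonglongrightarrow> (\<Sum>i\<in>UNIV. \<Sum>j\<in>UNIV. integral UNIV (\<lambda>x. pdiff u j x $ i * pdiff u i x $ j))"
    by (intro tendsto_sum tendsto_integral_diff_quot_product h(2))
  then show ?thesis
    using sum_integral_diff_quot_product_nonneg[OF h] by (intro LIMSEQ_le_const) auto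
qed

lemma grad_outside: "x \<notin> K \<Longrightarrow> grad u x = 0"
  by (simp add: grad_def pdiff_outside vec_eq_iff)

lemma continuous_grad: "continuous_on UNIV (grad u)"
  unfolding grad_def by (intro continuous_intros continuous_on_vec_lambda continuous_pdiff)

lemma integrable_vanishing_outside_K:
  fixes F :: "vec3 \<Rightarrow> 'b::banach"
  assumes "continuous_on UNIV F" "\<And>x. x \<notin> K \<Longrightarrow> F x = 0"
  shows "F integrable_on UNIV"
  using integrable_continuous_bounded_support[OF assms(1) compact_imp_bounded[OF compact_K]] assms(2) .

lemma korn_UNIV:
  "integral UNIV (\<lambda>x. (norm (grad u x))\<^sup>2) \<le> 2 * integral UNIV (\<lambda>x. (norm (symm (grad u x)))\<^sup>2)"
proof -
  let ?cross = "\<lambda>i j x. pdiff u j x $ i * pdiff u i x $ j"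
  have int_grad: "(\<lambda>x. (norm (grad u x))\<^sup>2) integrable_on UNIV"
    using continuous_grad grad_outside
    by (intro integrable_vanishing_outside_K continuous_intros) auto
  have int_symm: "(\<lambda>x. (norm (symm (grad u x)))\<^sup>2) integrable_on UNIV"
    using bounded_linear.continuous_on[OF bounded_linear_symm continuous_grad] grad_outside
    by (intro integrable_vanishing_outside_K continuous_intros) (auto simp: vec_eq_iff)
  have int_cross: "?cross i j integrable_on UNIV" for i j
    using continuous_pdiff pdiff_outside
    by (intro integrable_vanishing_outside_K continuous_intros) auto
  have pointwise: "2 * (norm (symm (grad u x)))\<^sup>2 = (norm (grad u x))\<^sup>2 + (\<Sum>i\<in>UNIV. \<Sum>j\<in>UNIV. ?cross i j x)"
    for x
    using two_power2_norm_symm[of "grad u x"] by (simp add: grad_def)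
  have "2 * integral UNIV (\<lambda>x. (norm (symm (grad u x)))\<^sup>2)
      = integral UNIV (\<lambda>x. (norm (grad u x))\<^sup>2 + (\<Sum>i\<in>UNIV. \<Sum>j\<in>UNIV. ?cross i j x))"
    by (simp only: integral_mult[OF int_symm] pointwise)
  also have "\<dots> = integral UNIV (\<lambda>x. (norm (grad u x))\<^sup>2)
      + (\<Sum>i\<in>UNIV. \<Sum>j\<in>UNIV. integral UNIV (?cross i j))"
    using int_grad int_cross
    by (simp only: integral_add integral_sum integrable_sum finite)
  finally show ?thesis
    using sum_integral_pdiff_product_nonneg by linarith
qed

end

lemma test_field_korn:
  assumes "test_field \<Omega> u"
  shows "L2 \<Omega> (grad u)"
    and "integral \<Omega> (\<lambda>x. (norm (grad u x))\<^sup>2) \<le> 2 * integral \<Omega> (\<lambda>x. (norm (symm (grad u x)))\<^sup>2)"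
proof -
  define K where "K = closure {x. u x \<noteq> 0}"
  have "smooth u \<and> compact K \<and> K \<subseteq> \<Omega>"
    using assms unfolding test_field_def K_def .
  then have smooth: "smooth u" and K: "compact K" "K \<subseteq> \<Omega>"
    by auto
  have outside: "u x = 0" if "x \<notin> K" for x
    using that closure_subset[of "{x. u x \<noteq> 0}"] unfolding K_def by auto
  interpret smooth_compact_support u K
    using smooth K(1) outside by (rule smooth_compact_support.intro)
  have grad_outside_\<Omega>: "grad u x = 0" if "x \<notin> \<Omega>" for x
    using grad_outside K(2) that by blast
  have "(\<lambda>x. if x \<in> \<Omega> then grad u x else 0) = grad u"
    using grad_outside_\<Omega> by auto
  then have "grad u measurable_on \<Omega>"
    using measurable_on_UNIV[of \<Omega> "grad u"] continuous_imp_measurable_on[OF continuous_grad] by simp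
  moreover have "(\<lambda>x. (norm (grad u x))\<^sup>2) integrable_on UNIV"
    using continuous_grad grad_outside
    by (intro integrable_vanishing_outside_K continuous_intros) auto
  then have "(\<lambda>x. (norm (grad u x))\<^sup>2) integrable_on \<Omega>"
    by (rule integrable_UNIV_vanishing_outside) (simp add: grad_outside_\<Omega>)
  ultimately show "L2 \<Omega> (grad u)"
    by (simp add: L2_def)
  have "integral \<Omega> (\<lambda>x. (norm (grad u x))\<^sup>2) = integral UNIV (\<lambda>x. (norm (grad u x))\<^sup>2)"
    by (rule integral_UNIV_vanishing_outside[symmetric]) (simp add: grad_outside_\<Omega>)
  moreover have "integral \<Omega> (\<lambda>x. (norm (symm (grad u x)))\<^sup>2)
      = integral UNIV (\<lambda>x. (norm (symm (grad u x)))\<^sup>2)"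
    by (rule integral_UNIV_vanishing_outside[symmetric]) (simp add: grad_outside_\<Omega> vec_eq_iff)
  ultimately show "integral \<Omega> (\<lambda>x. (norm (grad u x))\<^sup>2)
      \<le> 2 * integral \<Omega> (\<lambda>x. (norm (symm (grad u x)))\<^sup>2)"
    using korn_UNIV by simp
qed

section \<open>Korn's inequality on H_0^1 and coercivity of W1\<close>

lemma korn_H01:
  assumes H: "H01 \<Omega> \<phi> D" and \<Omega>: "\<Omega> \<in> sets lebesgue"
  shows "integral \<Omega> (\<lambda>x. (norm (D x))\<^sup>2) \<le> 8 * integral \<Omega> (\<lambda>x. (norm (symm (D x)))\<^sup>2)"
proof -
  obtain us where us: "\<And>n. test_field \<Omega> (us n)" and conv: "L2_conv \<Omega> (\<lambda>n. grad (us n)) D"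
    and D: "L2 \<Omega> D"
    using H unfolding H01_def by blast
  define err where "err n = integral \<Omega> (\<lambda>x. (norm (grad (us n) x - D x))\<^sup>2)" for n
  have "err \<longlonglongrightarrow> 0"
    using conv unfolding L2_conv_def err_def .
  have approx: "integral \<Omega> (\<lambda>x. (norm (D x))\<^sup>2)
      \<le> 8 * integral \<Omega> (\<lambda>x. (norm (symm (D x)))\<^sup>2) + 10 * err n" for n
  proof -
    let ?a = "grad (us n)"
    have a: "L2 \<Omega> ?a" and korn_a: "integral \<Omega> (\<lambda>x. (norm (?a x))\<^sup>2)
        \<le> 2 * integral \<Omega> (\<lambda>x. (norm (symm (?a x)))\<^sup>2)"
      using test_field_korn[OF us] by auto
    have a_D: "L2 \<Omega> (\<lambda>x. ?a x - D x)" and D_a: "L2 \<Omega> (\<lambda>x. D x - ?a x)"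
      using L2_diff a D \<Omega> by auto
    have err_sym: "err n = integral \<Omega> (\<lambda>x. (norm (D x - ?a x))\<^sup>2)"
      by (simp add: err_def norm_minus_commute)
    have "integral \<Omega> (\<lambda>x. (norm (D x))\<^sup>2) = integral \<Omega> (\<lambda>x. (norm (?a x + (D x - ?a x)))\<^sup>2)"
      by simp
    also have "\<dots> \<le> 2 * integral \<Omega> (\<lambda>x. (norm (?a x))\<^sup>2) + 2 * err n"
      using integral_power2_norm_add_le[OF a D_a \<Omega>] err_sym by simp
    finally have D_le: "integral \<Omega> (\<lambda>x. (norm (D x))\<^sup>2)
        \<le> 2 * integral \<Omega> (\<lambda>x. (norm (?a x))\<^sup>2) + 2 * err n" .
    have "integral \<Omega> (\<lambda>x. (norm (symm (?a x)))\<^sup>2)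
        = integral \<Omega> (\<lambda>x. (norm (symm (D x + (?a x - D x))))\<^sup>2)"
      by simp
    also have "\<dots> \<le> 2 * integral \<Omega> (\<lambda>x. (norm (symm (D x)))\<^sup>2) + 2 * err n"
      using integral_power2_norm_symm_add_le[OF D a_D \<Omega>] by (simp add: err_def)
    finally show ?thesis
      using D_le korn_a by linarith
  qed
  have "(\<lambda>n. 8 * integral \<Omega> (\<lambda>x. (norm (symm (D x)))\<^sup>2) + 10 * err n)
      \<longlonglongrightarrow> 8 * integral \<Omega> (\<lambda>x. (norm (symm (D x)))\<^sup>2) + 10 * 0"
    by (intro tendsto_intros \<open>err \<longlonglongrightarrow> 0\<close>)
  then show ?thesis
    using approx by (intro LIMSEQ_le_const) auto
qed

lemma korn_H01_perturbed:
  assumes H: "H01 \<Omega> \<phi> D" and \<Phi>: "L2 \<Omega> \<Phi>" and \<Omega>: "\<Omega> \<in> sets lebesgue"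
  shows "integral \<Omega> (\<lambda>x. (norm (D x))\<^sup>2)
           \<le> 16 * integral \<Omega> (\<lambda>x. (norm (symm (D x - \<Phi> x)))\<^sup>2) + 16 * integral \<Omega> (\<lambda>x. (norm (\<Phi> x))\<^sup>2)"
proof -
  have D_\<Phi>: "L2 \<Omega> (\<lambda>x. D x - \<Phi> x)"
    using H \<Phi> \<Omega> by (simp add: H01_def L2_diff)
  have "integral \<Omega> (\<lambda>x. (norm (symm (D x)))\<^sup>2) = integral \<Omega> (\<lambda>x. (norm (symm ((D x - \<Phi> x) + \<Phi> x)))\<^sup>2)"
    by simp
  also have "\<dots> \<le> 2 * integral \<Omega> (\<lambda>x. (norm (symm (D x - \<Phi> x)))\<^sup>2) + 2 * integral \<Omega> (\<lambda>x. (norm (\<Phi> x))\<^sup>2)"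
    by (rule integral_power2_norm_symm_add_le[OF D_\<Phi> \<Phi> \<Omega>])
  finally show ?thesis
    using korn_H01[OF H \<Omega>] by linarith
qed

lemma W1_density_lower_bound:
  fixes v :: vec3 and G P C :: mat3
  assumes m: "m \<le> \<rho>" "m \<le> J" "m \<le> ce" "m \<le> \<mu> * Lc\<^sup>2 * cL" and \<mu>: "0 \<le> \<mu>"
    and Ce: "\<And>X. X \<in> Sym3 \<Longrightarrow> ce * (norm X)\<^sup>2 \<le> tact Ce X \<bullet> X"
    and Cc: "\<And>X. X \<in> so3 \<Longrightarrow> 0 \<le> tact Cc X \<bullet> X"
    and Cmicro: "\<And>X. X \<in> Sym3 \<Longrightarrow> 0 \<le> tact Cmicro X \<bullet> X"
    and Laniso: "\<And>X. cL * (norm X)\<^sup>2 \<le> tact Laniso X \<bullet> X"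
  shows "m * ((norm v)\<^sup>2 + (norm P)\<^sup>2 + (norm (symm (G - P)))\<^sup>2 + (norm C)\<^sup>2)
           \<le> \<rho> * (v \<bullet> v) + J * (P \<bullet> P) + tact Ce (symm (G - P)) \<bullet> symm (G - P)
             + tact Cc (skew (G - P)) \<bullet> skew (G - P) + tact Cmicro (symm P) \<bullet> symm P
             + \<mu> * Lc\<^sup>2 * (tact Laniso C \<bullet> C)"
proof -
  have "m * (norm v)\<^sup>2 \<le> \<rho> * (v \<bullet> v)" "m * (norm P)\<^sup>2 \<le> J * (P \<bullet> P)"
    "m * (norm (symm (G - P)))\<^sup>2 \<le> ce * (norm (symm (G - P)))\<^sup>2"
    "m * (norm C)\<^sup>2 \<le> \<mu> * Lc\<^sup>2 * (cL * (norm C)\<^sup>2)"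
    using m by (simp_all add: mult_right_mono flip: power2_norm_eq_inner mult.assoc)
  moreover have "\<mu> * Lc\<^sup>2 * (cL * (norm C)\<^sup>2) \<le> \<mu> * Lc\<^sup>2 * (tact Laniso C \<bullet> C)"
    using \<mu> by (intro mult_left_mono Laniso) simp
  ultimately show ?thesis
    using Ce[OF symm_in_Sym3, of "G - P"] Cc[OF skew_in_so3, of "G - P"] Cmicro[OF symm_in_Sym3, of P]
    unfolding distrib_left by linarith
qed

lemma W1_diagonal_lower_bound:
  assumes \<Omega>: "\<Omega> \<in> sets lebesgue"
    and \<phi>: "L2 \<Omega> \<phi>" and D: "L2 \<Omega> D" and \<Phi>: "L2 \<Omega> \<Phi>" and CP: "L2 \<Omega> CP"
    and m: "m \<le> \<rho>" "m \<le> J" "m \<le> ce" "m \<le> \<mu> * Lc\<^sup>2 * cL" and \<mu>: "0 \<le> \<mu>"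
    and Ce: "\<And>X. X \<in> Sym3 \<Longrightarrow> ce * (norm X)\<^sup>2 \<le> tact Ce X \<bullet> X"
    and Cc: "\<And>X. X \<in> so3 \<Longrightarrow> 0 \<le> tact Cc X \<bullet> X"
    and Cmicro: "\<And>X. X \<in> Sym3 \<Longrightarrow> 0 \<le> tact Cmicro X \<bullet> X"
    and Laniso: "\<And>X. cL * (norm X)\<^sup>2 \<le> tact Laniso X \<bullet> X"
  shows "m * (integral \<Omega> (\<lambda>x. (norm (\<phi> x))\<^sup>2) + integral \<Omega> (\<lambda>x. (norm (\<Phi> x))\<^sup>2)
              + integral \<Omega> (\<lambda>x. (norm (symm (D x - \<Phi> x)))\<^sup>2) + integral \<Omega> (\<lambda>x. (norm (CP x))\<^sup>2))
           \<le> W1 \<Omega> \<rho> J \<mu> Lc Ce Cc Cmicro Laniso \<phi> D \<Phi> CP \<phi> D \<Phi> CP"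
proof -
  let ?E = "\<lambda>x. symm (D x - \<Phi> x)" and ?F = "\<lambda>x. skew (D x - \<Phi> x)" and ?S = "\<lambda>x. symm (\<Phi> x)"
  have D_\<Phi>: "L2 \<Omega> (\<lambda>x. D x - \<Phi> x)"
    by (rule L2_diff[OF D \<Phi> \<Omega>])
  have E: "L2 \<Omega> ?E" and F: "L2 \<Omega> ?F" and S: "L2 \<Omega> ?S"
    using L2_linear[OF bounded_linear_symm D_\<Phi> \<Omega>] L2_linear[OF bounded_linear_skew D_\<Phi> \<Omega>]
      L2_linear[OF bounded_linear_symm \<Phi> \<Omega>] by simp_all
  have tact_L2: "L2 \<Omega> (\<lambda>x. tact Ce (?E x))" "L2 \<Omega> (\<lambda>x. tact Cc (?F x))"
    "L2 \<Omega> (\<lambda>x. tact Cmicro (?S x))" "L2 \<Omega> (\<lambda>x. tact Laniso (CP x))"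
    using L2_linear[OF bounded_linear_tact _ \<Omega>] E F S CP by simp_all
  define density where "density x = \<rho> * (\<phi> x \<bullet> \<phi> x) + J * (\<Phi> x \<bullet> \<Phi> x)
      + tact Ce (?E x) \<bullet> ?E x + tact Cc (?F x) \<bullet> ?F x + tact Cmicro (?S x) \<bullet> ?S x
      + \<mu> * Lc\<^sup>2 * (tact Laniso (CP x) \<bullet> CP x)" for x
  have int_density: "density integrable_on \<Omega>"
    unfolding density_def
    by (intro integrable_add integrable_on_mult_right integrable_inner_L2[OF _ _ \<Omega>] tact_L2
        \<phi> \<Phi> E F S CP)
  define lower where "lower x = (norm (\<phi> x))\<^sup>2 + (norm (\<Phi> x))\<^sup>2 + (norm (?E x))\<^sup>2 + (norm (CP x))\<^sup>2"
    for x
  have int_lower: "lower integrable_on \<Omega>"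
    unfolding lower_def by (intro integrable_add L2_integrable_power2_norm \<phi> \<Phi> E CP)
  have pointwise: "m * lower x \<le> density x" for x
    unfolding lower_def density_def by (rule W1_density_lower_bound[OF m \<mu> Ce Cc Cmicro Laniso])
  have "m * integral \<Omega> lower = integral \<Omega> (\<lambda>x. m * lower x)"
    by (rule integral_mult[OF int_lower])
  also have "\<dots> \<le> integral \<Omega> density"
    by (rule integral_le[OF integrable_on_mult_right[OF int_lower] int_density pointwise])
  finally have "m * integral \<Omega> lower \<le> integral \<Omega> density" .
  moreover have "integral \<Omega> lower = integral \<Omega> (\<lambda>x. (norm (\<phi> x))\<^sup>2) + integral \<Omega> (\<lambda>x. (norm (\<Phi> x))\<^sup>2)
      + integral \<Omega> (\<lambda>x. (norm (?E x))\<^sup>2) + integral \<Omega> (\<lambda>x. (norm (CP x))\<^sup>2)"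
    unfolding lower_def
    by (simp add: integral_add integrable_add L2_integrable_power2_norm \<phi> \<Phi> E CP)
  moreover have "W1 \<Omega> \<rho> J \<mu> Lc Ce Cc Cmicro Laniso \<phi> D \<Phi> CP \<phi> D \<Phi> CP = integral \<Omega> density"
    unfolding W1_def density_def[abs_def] ..
  ultimately show ?thesis
    by simp
qed

lemma W1_coercive:
  assumes \<Omega>: "\<Omega> \<in> sets lebesgue" and H: "H01 \<Omega> \<phi> D" and HC: "H0Curl \<Omega> \<Phi> CP"
    and m: "0 \<le> m" "m \<le> \<rho>" "m \<le> J" "m \<le> ce" "m \<le> \<mu> * Lc\<^sup>2 * cL" and \<mu>: "0 \<le> \<mu>"
    and Ce: "\<And>X. X \<in> Sym3 \<Longrightarrow> ce * (norm X)\<^sup>2 \<le> tact Ce X \<bullet> X"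
    and Cc: "\<And>X. X \<in> so3 \<Longrightarrow> 0 \<le> tact Cc X \<bullet> X"
    and Cmicro: "\<And>X. X \<in> Sym3 \<Longrightarrow> 0 \<le> tact Cmicro X \<bullet> X"
    and Laniso: "\<And>X. cL * (norm X)\<^sup>2 \<le> tact Laniso X \<bullet> X"
  shows "m / 17 * (integral \<Omega> (\<lambda>x. (norm (\<phi> x))\<^sup>2) + integral \<Omega> (\<lambda>x. (norm (D x))\<^sup>2)
                   + integral \<Omega> (\<lambda>x. (norm (\<Phi> x))\<^sup>2) + integral \<Omega> (\<lambda>x. (norm (CP x))\<^sup>2))
           \<le> W1 \<Omega> \<rho> J \<mu> Lc Ce Cc Cmicro Laniso \<phi> D \<Phi> CP \<phi> D \<Phi> CP"
proof -
  have L2: "L2 \<Omega> \<phi>" "L2 \<Omega> D" "L2 \<Omega> \<Phi>" "L2 \<Omega> CP"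
    using H HC by (simp_all add: H01_def H0Curl_def)
  let ?I = "\<lambda>f. integral \<Omega> (\<lambda>x. (norm (f x))\<^sup>2 :: real)"
  let ?E = "\<lambda>x. symm (D x - \<Phi> x)"
  have "L2 \<Omega> ?E"
    using L2_linear[OF bounded_linear_symm L2_diff[OF L2(2,3) \<Omega>] \<Omega>] .
  then have nonneg: "0 \<le> ?I \<phi>" "0 \<le> ?I \<Phi>" "0 \<le> ?I ?E" "0 \<le> ?I CP"
    using L2 by (auto intro!: integral_nonneg simp: L2_def)
  have "?I D \<le> 16 * ?I ?E + 16 * ?I \<Phi>"
    by (rule korn_H01_perturbed[OF H L2(3) \<Omega>])
  then have "?I \<phi> + ?I D + ?I \<Phi> + ?I CP \<le> 17 * (?I \<phi> + ?I \<Phi> + ?I ?E + ?I CP)"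
    unfolding distrib_left using nonneg by linarith
  then have "m / 17 * (?I \<phi> + ?I D + ?I \<Phi> + ?I CP) \<le> m / 17 * (17 * (?I \<phi> + ?I \<Phi> + ?I ?E + ?I CP))"
    by (rule mult_left_mono) (use m(1) in simp)
  also have "\<dots> = m * (?I \<phi> + ?I \<Phi> + ?I ?E + ?I CP)"
    by simp
  also have "\<dots> \<le> W1 \<Omega> \<rho> J \<mu> Lc Ce Cc Cmicro Laniso \<phi> D \<Phi> CP \<phi> D \<Phi> CP"
    by (rule W1_diagonal_lower_bound[OF \<Omega> L2 m(2-5) \<mu> Ce Cc Cmicro Laniso])
  finally show ?thesis .
qed

theorem mainTheorem3:
  fixes \<Omega> :: "(real^3) set"
    and Ce Cc Cmicro Laniso :: "3 \<Rightarrow> 3 \<Rightarrow> 3 \<Rightarrow> 3 \<Rightarrow> real"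
    and \<rho> J Lc \<mu> :: real
  assumes dom: "open \<Omega>" "connected \<Omega>" "bounded \<Omega>" "\<Omega> \<noteq> {}"
    and Ce_sym: "\<forall>i j r s. Ce i j r s = Ce r s i j \<and> Ce i j r s = Ce j i r s"
    and Cm_sym: "\<forall>i j r s. Cmicro i j r s = Cmicro r s i j \<and> Cmicro i j r s = Cmicro j i r s"
    and Cc_sym: "\<forall>i j r s. Cc i j r s = - Cc j i r s \<and> Cc i j r s = Cc r s i j"
    and L_sym: "\<forall>i j r s. Laniso i j r s = Laniso r s i j"
    and Ce_pd: "pos_def_on Sym3 Ce"
    and L_pd: "pos_def_on UNIV Laniso"
    and Cm_psd: "psd_bounded_on Sym3 Cmicro"
    and Cc_psd: "psd_bounded_on so3 Cc"
    and pos: "\<rho> > 0" "J > 0" "Lc > 0" "\<mu> > 0"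
  shows "\<exists>c>0. \<forall>\<phi> D\<phi> \<Phi> Curl\<Phi>. H01 \<Omega> \<phi> D\<phi> \<longrightarrow> H0Curl \<Omega> \<Phi> Curl\<Phi> \<longrightarrow>
           W1 \<Omega> \<rho> J \<mu> Lc Ce Cc Cmicro Laniso \<phi> D\<phi> \<Phi> Curl\<Phi> \<phi> D\<phi> \<Phi> Curl\<Phi>
             \<ge> c * ( integral \<Omega> (\<lambda>x. (norm (\<phi> x))\<^sup>2) + integral \<Omega> (\<lambda>x. (norm (D\<phi> x))\<^sup>2)
                    + integral \<Omega> (\<lambda>x. (norm (\<Phi> x))\<^sup>2) + integral \<Omega> (\<lambda>x. (norm (Curl\<Phi> x))\<^sup>2))"
proof -
  obtain ce where ce: "ce > 0" "\<And>X. X \<in> Sym3 \<Longrightarrow> ce * (norm X)\<^sup>2 \<le> tact Ce X \<bullet> X"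
    using Ce_pd unfolding pos_def_on_def by blast
  obtain cL where cL: "cL > 0" "\<And>X. cL * (norm X)\<^sup>2 \<le> tact Laniso X \<bullet> X"
    using L_pd unfolding pos_def_on_def by blast
  have Cc: "\<And>X. X \<in> so3 \<Longrightarrow> 0 \<le> tact Cc X \<bullet> X"
    and Cmicro: "\<And>X. X \<in> Sym3 \<Longrightarrow> 0 \<le> tact Cmicro X \<bullet> X"
    using Cc_psd Cm_psd unfolding psd_bounded_on_def by blast+
  define m where "m = min (min \<rho> J) (min ce (\<mu> * Lc\<^sup>2 * cL))"
  have m: "0 < m" "m \<le> \<rho>" "m \<le> J" "m \<le> ce" "m \<le> \<mu> * Lc\<^sup>2 * cL"
    using pos ce cL by (auto simp: m_def)
  have \<Omega>: "\<Omega> \<in> sets lebesgue"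
    using dom(1) by (simp add: borel_open)
  show ?thesis
  proof (intro exI[of _ "m / 17"] conjI allI impI)
    show "0 < m / 17"
      using m(1) by simp
    fix \<phi> D \<Phi> CP
    assume "H01 \<Omega> \<phi> D" "H0Curl \<Omega> \<Phi> CP"
    then show "m / 17 * (integral \<Omega> (\<lambda>x. (norm (\<phi> x))\<^sup>2) + integral \<Omega> (\<lambda>x. (norm (D x))\<^sup>2)
        + integral \<Omega> (\<lambda>x. (norm (\<Phi> x))\<^sup>2) + integral \<Omega> (\<lambda>x. (norm (CP x))\<^sup>2))
        \<le> W1 \<Omega> \<rho> J \<mu> Lc Ce Cc Cmicro Laniso \<phi> D \<Phi> CP \<phi> D \<Phi> CP"
      using pos(4) by (intro W1_coercive[OF \<Omega> _ _ less_imp_le[OF m(1)] m(2-5) _ ce(2) Cc Cmicro cL(2)]) auto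
  qed
qed

end
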